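(* If $G$ is a uniformly dense (finite, simple) graph with at least one edge, then its clique number satisfies $\operatorname{cl}(G)\le 2\rho(G)$.
   Context: For $A\subseteq E$, $c(A)$ is the number of components of $(V,A)$, $\operatorname{rank}(A)=|V|-c(A)$, $\rho(A)=|A|/\operatorname{rank}(A)$, $\rho(G)=\rho(E)$; $G$ is uniformly dense if $\rho(A)\le\rho(G)$ for all nonempty $A\subseteq E$. $\operatorname{cl}(G)$ is the largest number of vertices of a clique (pairwise adjacent vertex set). *)

theory Defs
  imports Complex_Main
begin

definition simple_graph :: "'a set \<Rightarrow> 'a set set \<Rightarrow> bool" where
  "simple_graph V E \<longleftrightarrow> finite V \<and> (\<forall>e\<in>E. e \<subseteq> V \<and> card e = 2)"

definition conn_rel :: "'a set \<Rightarrow> 'a set set \<Rightarrow> ('a \<times> 'a) set" where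
  "conn_rel V A = (Id_on V \<union> {(u,v). u \<in> V \<and> v \<in> V \<and> {u,v} \<in> A})\<^sup>*"

definition num_components :: "'a set \<Rightarrow> 'a set set \<Rightarrow> nat" where
  "num_components V A = card (V // conn_rel V A)"

definition graph_rank :: "'a set \<Rightarrow> 'a set set \<Rightarrow> nat" where
  "graph_rank V A = card V - num_components V A"

definition density :: "'a set \<Rightarrow> 'a set set \<Rightarrow> real" where
  "density V A = real (card A) / real (graph_rank V A)"

definition uniformly_dense :: "'a set \<Rightarrow> 'a set set \<Rightarrow> bool" where
  "uniformly_dense V E \<longleftrightarrow> (\<forall>A. A \<subseteq> E \<and> A \<noteq> {} \<longrightarrow> density V A \<le> density V E)"

definition is_clique :: "'a set \<Rightarrow> 'a set set \<Rightarrow> 'a set \<Rightarrow> bool" where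
  "is_clique V E K \<longleftrightarrow> K \<subseteq> V \<and> (\<forall>u\<in>K. \<forall>v\<in>K. u \<noteq> v \<longrightarrow> {u,v} \<in> E)"

definition clique_number :: "'a set \<Rightarrow> 'a set set \<Rightarrow> nat" where
  "clique_number V E = Max (card ` {K. is_clique V E K})"

end

theory Submission
  imports Defs
begin

text \<open>A maximum clique \<open>K\<close> with \<open>k \<ge> 2\<close> vertices spans \<open>k choose 2\<close> edges, and their rank is at
  most \<open>k - 1\<close> because every vertex outside \<open>K\<close> is an isolated component. Hence the edge set of
  \<open>K\<close> has density at least \<open>k / 2\<close>, which uniform density bounds by \<open>\<rho>(G)\<close>.\<close>

lemma finite_cliques:
  assumes "finite V"
  shows "finite {K. is_clique V E K}"
  using assms by (rule finite_subset[rotated, OF finite_Pow_iff[THEN iffD2]]) (auto simp: is_clique_def)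

lemma clique_number_attained:
  assumes "finite V"
  obtains K where "is_clique V E K" and "card K = clique_number V E"
proof -
  have "{K. is_clique V E K} \<noteq> {}"
    by (auto simp: is_clique_def)
  then have "clique_number V E \<in> card ` {K. is_clique V E K}"
    unfolding clique_number_def using finite_cliques[OF assms] by (intro Max_in) auto
  then show ?thesis using that by auto
qed

lemma card_le_clique_number:
  assumes "finite V" and "is_clique V E K"
  shows "card K \<le> clique_number V E"
  unfolding clique_number_def using assms finite_cliques[OF assms(1)] by (intro Max_ge) auto

lemma edge_is_clique:
  assumes "simple_graph V E" and "e \<in> E"
  shows "is_clique V E e"
proof -
  obtain u v where "e = {u, v}" and "u \<noteq> v"
    using assms by (auto simp: simple_graph_def card_2_iff)
  then show ?thesis
    using assms by (auto simp: simple_graph_def is_clique_def insert_commute)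
qed

lemma two_le_clique_number:
  assumes "simple_graph V E" and "E \<noteq> {}"
  shows "2 \<le> clique_number V E"
proof -
  obtain e where "e \<in> E" using assms(2) by blast
  then have "card e = 2" and "is_clique V E e"
    using assms(1) edge_is_clique by (auto simp: simple_graph_def)
  then show ?thesis
    using card_le_clique_number assms(1) by (metis simple_graph_def)
qed

definition complete_edges :: "'a set \<Rightarrow> 'a set set" where
  "complete_edges K = {e. e \<subseteq> K \<and> card e = 2}"

lemma card_complete_edges:
  assumes "finite K"
  shows "card (complete_edges K) = card K choose 2"
  unfolding complete_edges_def using n_subsets[OF assms] by simp

lemma complete_edges_subset:
  assumes "is_clique V E K"
  shows "complete_edges K \<subseteq> E"
  using assms by (auto simp: complete_edges_def is_clique_def card_2_iff)

lemma conn_rel_edge: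
  assumes "u \<in> V" and "v \<in> V" and "{u, v} \<in> A"
  shows "(u, v) \<in> conn_rel V A"
  using assms unfolding conn_rel_def by auto

lemma conn_rel_isolated:
  assumes "\<forall>e\<in>A. v \<notin> e"
  shows "conn_rel V A `` {v} = {v}"
proof -
  have "w = v" if "(v, w) \<in> conn_rel V A" for w
    using that unfolding conn_rel_def
  proof (induction rule: rtrancl_induct)
    case (step y z)
    then show ?case using assms by auto
  qed simp
  then show ?thesis unfolding conn_rel_def by auto
qed

lemma components_eq_image: "V // conn_rel V A = (\<lambda>x. conn_rel V A `` {x}) ` V"
  unfolding quotient_def by auto

lemma num_components_less:
  assumes "finite V" and "u \<in> V" and "v \<in> V" and "u \<noteq> v" and "{u, v} \<in> A"
  shows "num_components V A < card V"
proof -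
  let ?R = "conn_rel V A"
  have "(u, v) \<in> ?R" and "(v, u) \<in> ?R"
    using assms conn_rel_edge[of _ V _ A] by (auto simp: insert_commute)
  then have "?R `` {u} = ?R `` {v}"
    unfolding conn_rel_def by (auto intro: rtrancl_trans)
  then have "V // ?R = (\<lambda>x. ?R `` {x}) ` (V - {v})"
    unfolding components_eq_image using assms(2,4) by (auto simp: image_iff)
  then have "num_components V A \<le> card (V - {v})"
    unfolding num_components_def by (simp add: card_image_le assms(1))
  then show ?thesis
    using assms(1,3) card_Diff1_less by fastforce
qed

lemma num_components_ge:
  assumes "finite V" and "K \<subseteq> V" and "K \<noteq> {}" and "\<forall>e\<in>A. e \<subseteq> K"
  shows "card (V - K) + 1 \<le> num_components V A"
proof -
  let ?R = "conn_rel V A"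
  let ?class = "\<lambda>x. ?R `` {x}"
  obtain k where "k \<in> K" using assms(3) by blast
  have isolated: "?class v = {v}" if "v \<in> V - K" for v
    using that assms(4) by (intro conn_rel_isolated) blast
  have "?class k \<notin> ?class ` (V - K)"
  proof
    assume "?class k \<in> ?class ` (V - K)"
    then obtain x where "x \<in> V - K" and "?class k = {x}"
      using isolated by fastforce
    moreover have "k \<in> ?class k" unfolding conn_rel_def by auto
    ultimately show False using \<open>k \<in> K\<close> by auto
  qed
  moreover have "inj_on ?class (V - K)"
    using isolated by (auto simp: inj_on_def)
  ultimately have "card (insert (?class k) (?class ` (V - K))) = card (V - K) + 1"
    using assms(1) by (simp add: card_image)
  moreover have "insert (?class k) (?class ` (V - K)) \<subseteq> V // ?R"
    unfolding components_eq_image using \<open>k \<in> K\<close> assms(2) by auto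
  ultimately show ?thesis
    unfolding num_components_def components_eq_image
    by (metis assms(1) card_mono finite_imageI)
qed

lemma graph_rank_pos:
  assumes "finite V" and "u \<in> V" and "v \<in> V" and "u \<noteq> v" and "{u, v} \<in> A"
  shows "0 < graph_rank V A"
  using num_components_less[OF assms] unfolding graph_rank_def by simp

lemma graph_rank_le:
  assumes "finite V" and "K \<subseteq> V" and "K \<noteq> {}" and "\<forall>e\<in>A. e \<subseteq> K"
  shows "graph_rank V A \<le> card K - 1"
  using num_components_ge[OF assms] card_Diff_subset[OF finite_subset[OF assms(2,1)] assms(2)]
    card_mono[OF assms(1,2)]
  unfolding graph_rank_def by linarith

lemma density_complete_edges_ge:
  assumes "finite V" and "K \<subseteq> V" and "2 \<le> card K"
  shows "real (card K) / 2 \<le> density V (complete_edges K)"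
proof -
  have "finite K" using assms(1,2) finite_subset by blast
  have "\<not> card K \<le> Suc 0" using assms(3) by simp
  then obtain u v where "u \<in> K" and "v \<in> K" and "u \<noteq> v"
    using card_le_Suc0_iff_eq[OF \<open>finite K\<close>] by auto
  then have "{u, v} \<in> complete_edges K"
    by (simp add: complete_edges_def)
  then have rank_pos: "0 < graph_rank V (complete_edges K)"
    using \<open>u \<in> K\<close> \<open>v \<in> K\<close> \<open>u \<noteq> v\<close> assms(1,2) by (intro graph_rank_pos) auto
  have rank_le: "graph_rank V (complete_edges K) \<le> card K - 1"
    using assms \<open>u \<in> K\<close> by (intro graph_rank_le) (auto simp: complete_edges_def)
  have "2 * (card K choose 2) = card K * (card K - 1)"
    unfolding choose_two by (rule dvd_mult_div_cancel) (cases "card K"; simp)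
  then have "2 * real (card K choose 2) = real (card K) * real (card K - 1)"
    by (metis of_nat_mult of_nat_numeral)
  then have "real (card K) / 2 = real (card K choose 2) / real (card K - 1)"
    using assms(3) by (simp add: field_simps)
  also have "\<dots> \<le> real (card K choose 2) / real (graph_rank V (complete_edges K))"
    using rank_pos rank_le by (intro divide_left_mono) auto
  also have "\<dots> = density V (complete_edges K)"
    by (simp add: density_def card_complete_edges[OF \<open>finite K\<close>])
  finally show ?thesis .
qed

theorem proposition3p7:
  fixes V :: "'a set" and E :: "'a set set"
  assumes "simple_graph V E"
    and "E \<noteq> {}"
    and "uniformly_dense V E"
  shows "real (clique_number V E) \<le> 2 * density V E"
proof -
  have "finite V" using assms(1) by (simp add: simple_graph_def)
  then obtain K where clique: "is_clique V E K" and card_K: "card K = clique_number V E"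
    by (rule clique_number_attained)
  have "2 \<le> card K"
    using card_K two_le_clique_number[OF assms(1,2)] by simp
  moreover have "finite K"
    using clique \<open>finite V\<close> by (meson is_clique_def rev_finite_subset)
  ultimately have "0 < card (complete_edges K)"
    by (simp add: card_complete_edges)
  then have "complete_edges K \<noteq> {}"
    by auto
  have "real (card K) / 2 \<le> density V (complete_edges K)"
    using \<open>finite V\<close> clique \<open>2 \<le> card K\<close> by (intro density_complete_edges_ge) (auto simp: is_clique_def)
  also have "\<dots> \<le> density V E"
    using assms(3) complete_edges_subset[OF clique] \<open>complete_edges K \<noteq> {}\<close>
    by (simp add: uniformly_dense_def)
  finally show ?thesis using card_K by simp
qed

end
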